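(* Let $\varphi\in H^\infty$ be saturated. Then $I\varphi$ is saturated for every inner function $I$.
   Context: $\mathbb{T}$ is the unit circle; $H^\infty$ is the space of bounded functions on $\mathbb{T}$ with Fourier coefficients supported on $\{0,1,2,\dots\}$, and $H^\infty_0$ is the subspace of $H^\infty$ of functions vanishing at the origin (zero mean). An inner function is $I\in H^\infty$ with $|I|=1$ a.e. on $\mathbb{T}$. A function $\varphi\in H^\infty$ is saturated if $\|\varphi\|_\infty = \inf_{f\in H^\infty_0}\|\varphi-\overline{f}\|_\infty$. *)

theory Defs
  imports "HOL-Analysis.Analysis" "HOL-Probability.Essential_Supremum"
begin

text \<open>The unit circle T is parametrised by t in [0, 2 pi] (via t maps to e^{it}),
  with normalised-up-to-constant Lebesgue measure. Functions on T are
  functions real to complex, considered on [0, 2 pi].\<close>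

definition circ :: "real measure" where
  "circ = lebesgue_on {0..2*pi}"

definition sup_norm :: "(real \<Rightarrow> complex) \<Rightarrow> ereal" where
  "sup_norm f = esssup circ (\<lambda>t. ereal (cmod (f t)))"

definition fourier_coeff :: "(real \<Rightarrow> complex) \<Rightarrow> int \<Rightarrow> complex" where
  "fourier_coeff f n =
     complex_of_real (1 / (2*pi)) * (LINT t|circ. f t * cis (- (real_of_int n * t)))"

definition Linf :: "(real \<Rightarrow> complex) set" where
  "Linf = {f. f \<in> borel_measurable circ \<and> sup_norm f < \<infinity>}"

definition Hinf :: "(real \<Rightarrow> complex) set" where
  "Hinf = {f \<in> Linf. \<forall>n::int. n < 0 \<longrightarrow> fourier_coeff f n = 0}"

definition Hinf0 :: "(real \<Rightarrow> complex) set" where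
  "Hinf0 = {f \<in> Hinf. fourier_coeff f 0 = 0}"

definition inner_fun :: "(real \<Rightarrow> complex) \<Rightarrow> bool" where
  "inner_fun I \<longleftrightarrow> I \<in> Hinf \<and> (AE t in circ. cmod (I t) = 1)"

definition saturated :: "(real \<Rightarrow> complex) \<Rightarrow> bool" where
  "saturated \<phi> \<longleftrightarrow>
     sup_norm \<phi> = (INF f\<in>Hinf0. sup_norm (\<lambda>t. \<phi> t - cnj (f t)))"

end

theory Submission
  imports Defs
begin

(* If |I| = 1 a.e., then |I phi - cnj f| = |phi - cnj (I f)| a.e.; hence I phi has the norm of
   phi, and its distance to cnj H^infinity_0 is at least that of phi as soon as
   I H^infinity_0 is contained in H^infinity_0.  For n <= 0 the n-th Fourier coefficient of
   I f is the integral of I h with h(t) = f(t) e^(-int), a bounded function without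
   nonpositive frequencies.  Replacing I by its Fourier partial sum S_N I makes this integral
   vanish term by term, and the error is at most |h|_infinity |I - S_N I|_1.  This is small
   because S_N I is the best L^2 approximation of I by trigonometric polynomials of degree N,
   and trigonometric polynomials are L^2-dense among bounded functions: approximate by
   continuous functions, then use Stone-Weierstrass on the circle. *)

section \<open>Trigonometric polynomials\<close>

definition trig_poly :: "(complex \<times> int) list \<Rightarrow> real \<Rightarrow> complex" where
  "trig_poly L t = (\<Sum>(c, k)\<leftarrow>L. c * cis (of_int k * t))"

lemma trig_poly_Nil [simp]: "trig_poly [] t = 0"
  by (simp add: trig_poly_def)

lemma trig_poly_Cons [simp]: "trig_poly ((c, k) # L) t = c * cis (of_int k * t) + trig_poly L t"
  by (simp add: trig_poly_def)

lemma trig_poly_append [simp]: "trig_poly (L1 @ L2) t = trig_poly L1 t + trig_poly L2 t"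
  by (simp add: trig_poly_def)

definition trig_poly_mult :: "(complex \<times> int) list \<Rightarrow> (complex \<times> int) list \<Rightarrow> (complex \<times> int) list" where
  "trig_poly_mult L1 L2 = concat (map (\<lambda>(c, j). map (\<lambda>(d, k). (c * d, j + k)) L2) L1)"

lemma trig_poly_mult [simp]: "trig_poly (trig_poly_mult L1 L2) t = trig_poly L1 t * trig_poly L2 t"
proof -
  have shift: "trig_poly (map (\<lambda>(d, k). (c * d, j + k)) L) t = c * cis (of_int j * t) * trig_poly L t"
    for c j and L :: "(complex \<times> int) list"
    by (induction L) (auto simp: algebra_simps cis_mult)
  show ?thesis
    by (induction L1) (auto simp: trig_poly_mult_def shift algebra_simps)
qed

lemma real_polynomial_function_on_circle_is_trig_poly:
  assumes "real_polynomial_function p"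
  shows "\<exists>L. \<forall>t. complex_of_real (p (cis t)) = trig_poly L t"
  using assms
proof (induction p rule: real_polynomial_function.induct)
  case (linear f)
  then interpret bounded_linear f .
  have f_cis: "f (cis t) = cos t * f 1 + sin t * f \<i>" for t
  proof -
    have "cis t = cos t *\<^sub>R 1 + sin t *\<^sub>R \<i>" by (simp add: complex_eq_iff)
    then have "f (cis t) = f (cos t *\<^sub>R 1 + sin t *\<^sub>R \<i>)" by simp
    also have "\<dots> = cos t * f 1 + sin t * f \<i>" by (simp add: add scale)
    finally show ?thesis .
  qed
  let ?a = "complex_of_real (f 1)" and ?b = "complex_of_real (f \<i>)"
  have "complex_of_real (f (cis t)) = trig_poly [(?a/2 - \<i>*?b/2, 1), (?a/2 + \<i>*?b/2, -1)] t" for t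
    by (simp add: f_cis complex_eq_iff field_simps)
  then show ?case by blast
next
  case (const c)
  show ?case by (rule exI[of _ "[(complex_of_real c, 0)]"]) simp
next
  case (add f g)
  then obtain L1 L2 where "\<forall>t. complex_of_real (f (cis t)) = trig_poly L1 t"
    and "\<forall>t. complex_of_real (g (cis t)) = trig_poly L2 t" by blast
  then show ?case by (intro exI[of _ "L1 @ L2"]) simp
next
  case (mult f g)
  then obtain L1 L2 where "\<forall>t. complex_of_real (f (cis t)) = trig_poly L1 t"
    and "\<forall>t. complex_of_real (g (cis t)) = trig_poly L2 t" by blast
  then show ?case by (intro exI[of _ "trig_poly_mult L1 L2"]) simp
qed

lemma polynomial_function_on_circle_is_trig_poly:
  fixes g :: "complex \<Rightarrow> complex"
  assumes "polynomial_function g"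
  shows "\<exists>L. \<forall>t. g (cis t) = trig_poly L t"
proof -
  have "real_polynomial_function (Re \<circ> g)" "real_polynomial_function (Im \<circ> g)"
    using assms bounded_linear_Re bounded_linear_Im unfolding polynomial_function_def by blast+
  then obtain L1 L2 where L1: "\<forall>t. complex_of_real (Re (g (cis t))) = trig_poly L1 t"
     and L2: "\<forall>t. complex_of_real (Im (g (cis t))) = trig_poly L2 t"
    using real_polynomial_function_on_circle_is_trig_poly[of "Re \<circ> g"]
      real_polynomial_function_on_circle_is_trig_poly[of "Im \<circ> g"] by auto
  have "g (cis t) = trig_poly (L1 @ trig_poly_mult [(\<i>, 0)] L2) t" for t
    using L1 L2 by (simp add: complex_eq_iff)
  then show ?thesis by blast
qed

lemma Arg2pi_cis: "t \<in> {0..<2*pi} \<Longrightarrow> Arg2pi (cis t) = t"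
  using Arg2pi_exp[of "\<i> * complex_of_real t"] by (simp add: cis_conv_exp)

lemma periodic_Arg2pi_cis:
  assumes "h 0 = h (2*pi)" and "t \<in> {0..2*pi}"
  shows "h (Arg2pi (cis t)) = h t"
  using assms Arg2pi_cis[of t] Arg2pi_cis[of 0] by (cases "t = 2*pi") auto

(* Arg2pi jumps at 1, but h o Arg2pi is continuous: h is periodic and cis is a quotient map
   of [0, 2 pi] onto the circle. *)
lemma continuous_on_sphere_Arg2pi_compose:
  fixes h :: "real \<Rightarrow> 'a::topological_space"
  assumes h: "continuous_on {0..2*pi} h" and periodic: "h 0 = h (2*pi)"
  shows "continuous_on (sphere 0 1) (h \<circ> Arg2pi)"
proof -
  have cis_sphere: "cis ` {0..2*pi} = sphere 0 1"
  proof
    show "sphere 0 1 \<subseteq> cis ` {0..2*pi}"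
    proof
      fix z :: complex assume "z \<in> sphere 0 1"
      then have "cis (Arg2pi z) = z"
        using complex_norm_eq_1_exp[of z] by (simp add: cis_conv_exp)
      moreover have "Arg2pi z \<in> {0..2*pi}" using Arg2pi[of z] by auto
      ultimately show "z \<in> cis ` {0..2*pi}" by (metis image_eqI)
    qed
  qed auto
  have "quotient_map (top_of_set {0..2*pi}) (top_of_set (sphere 0 1)) cis"
  proof (rule continuous_imp_quotient_map)
    show "continuous_map (top_of_set {0..2*pi}) (top_of_set (sphere 0 1)) cis"
      using cis_sphere by (auto intro: continuous_intros)
    show "compact_space (top_of_set {0..2*pi})"
      by (simp add: compact_space_subtopology)
    show "Hausdorff_space (top_of_set (sphere (0::complex) 1))"
      by (rule Hausdorff_space_subtopology) simp
  qed (simp add: cis_sphere)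
  moreover have "continuous_map (top_of_set {0..2*pi}) euclidean (h \<circ> Arg2pi \<circ> cis)"
  proof -
    have "(h \<circ> Arg2pi \<circ> cis) t = h t" if "t \<in> {0..2*pi}" for t
      using periodic_Arg2pi_cis[OF periodic that] by simp
    then show ?thesis using continuous_on_eq[OF h] by (simp add: comp_def)
  qed
  ultimately have "continuous_map (top_of_set (sphere 0 1)) euclidean (h \<circ> Arg2pi)"
    by (rule continuous_compose_quotient_map)
  then show ?thesis by simp
qed

lemma uniform_approx_by_trig_poly:
  fixes h :: "real \<Rightarrow> complex"
  assumes h: "continuous_on {0..2*pi} h" and periodic: "h 0 = h (2*pi)" and e: "e > 0"
  shows "\<exists>L. \<forall>t\<in>{0..2*pi}. cmod (h t - trig_poly L t) < e"
proof -
  obtain g where g: "polynomial_function g" "\<forall>z\<in>sphere 0 1. cmod ((h \<circ> Arg2pi) z - g z) < e"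
    using Stone_Weierstrass_polynomial_function[OF compact_sphere
        continuous_on_sphere_Arg2pi_compose[OF h periodic] e] by blast
  obtain L where L: "\<forall>t. g (cis t) = trig_poly L t"
    using polynomial_function_on_circle_is_trig_poly[OF g(1)] by blast
  have "cmod (h t - trig_poly L t) < e" if "t \<in> {0..2*pi}" for t
    using g(2)[rule_format, of "cis t"] L periodic_Arg2pi_cis[OF periodic that] by simp
  then show ?thesis by blast
qed

section \<open>Bounded functions on the circle\<close>

lemma space_circ [simp]: "space circ = {0..2*pi}"
  by (simp add: circ_def)

lemma finite_measure_circ: "finite_measure circ"
  unfolding circ_def by (rule finite_measure_lebesgue_on) simp

lemma continuous_on_imp_borel_measurable_circ:
  fixes f :: "real \<Rightarrow> 'b::euclidean_space"
  assumes "continuous_on {0..2*pi} f"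
  shows "f \<in> borel_measurable circ"
  unfolding circ_def by (rule continuous_imp_measurable_on_sets_lebesgue[OF assms]) simp

lemma integral_circ_eq_has_integral:
  fixes f :: "real \<Rightarrow> 'b::euclidean_space"
  assumes "integrable circ f" and "(f has_integral I) {0..2*pi}"
  shows "integral\<^sup>L circ f = I"
proof -
  have "(f has_integral (integral\<^sup>L circ f)) {0..2*pi}"
    using assms(1) unfolding circ_def by (intro has_integral_integral_lebesgue_on) auto
  then show ?thesis using assms(2) has_integral_unique by blast
qed

lemma integrable_circ_const [simp]: "integrable circ (\<lambda>t. c)"
  by (rule finite_measure.integrable_const[OF finite_measure_circ])

lemma measure_circ [simp]: "measure circ {0..2*pi} = 2*pi"
  by (simp add: circ_def measure_restrict_space)

lemma AE_circ_not_in_negligible: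
  assumes "negligible N"
  shows "AE t in circ. t \<notin> N"
proof -
  have "N \<inter> {0..2*pi} \<in> null_sets lebesgue"
    using negligible_subset[OF assms] by (simp add: negligible_iff_null_sets)
  then have "N \<inter> {0..2*pi} \<in> null_sets circ"
    by (simp add: circ_def null_sets_restrict_space)
  then have "AE t in circ. t \<notin> N \<inter> {0..2*pi}" by (rule AE_not_in)
  then show ?thesis using AE_space[of circ] by eventually_elim auto
qed

lemma Linf_iff: "f \<in> Linf \<longleftrightarrow> f \<in> borel_measurable circ \<and> (\<exists>B. AE t in circ. cmod (f t) \<le> B)"
proof
  assume f: "f \<in> Linf"
  then have S: "sup_norm f < \<infinity>" by (simp add: Linf_def)
  have "AE t in circ. ereal (cmod (f t)) \<le> sup_norm f"
    unfolding sup_norm_def by (rule esssup_AE)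
  then have "AE t in circ. cmod (f t) \<le> real_of_ereal (sup_norm f)"
    by eventually_elim (use S in \<open>cases "sup_norm f"; auto\<close>)
  then show "f \<in> borel_measurable circ \<and> (\<exists>B. AE t in circ. cmod (f t) \<le> B)"
    using f by (auto simp: Linf_def)
next
  assume "f \<in> borel_measurable circ \<and> (\<exists>B. AE t in circ. cmod (f t) \<le> B)"
  then obtain B where f [measurable]: "f \<in> borel_measurable circ"
    and B: "AE t in circ. cmod (f t) \<le> B"
    by blast
  have "sup_norm f \<le> ereal B" unfolding sup_norm_def
    by (rule esssup_I) (use B in \<open>auto elim: eventually_mono\<close>)
  then show "f \<in> Linf" using f unfolding Linf_def by (auto simp: le_less_trans)
qed

lemma Linf_imp_borel_measurable [measurable_dest]: "f \<in> Linf \<Longrightarrow> f \<in> borel_measurable circ"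
  by (simp add: Linf_def)

lemma Linf_AE_bounded:
  assumes "f \<in> Linf"
  obtains B where "B \<ge> 0" and "AE t in circ. cmod (f t) \<le> B"
proof -
  obtain B where "AE t in circ. cmod (f t) \<le> B" using assms by (auto simp: Linf_iff)
  then have "AE t in circ. cmod (f t) \<le> max B 0" by eventually_elim auto
  then show ?thesis by (rule that[rotated]) simp
qed

lemma integrable_bounded_circ:
  fixes f :: "real \<Rightarrow> 'b::{banach,second_countable_topology}"
  assumes "f \<in> borel_measurable circ" and "AE t in circ. norm (f t) \<le> B"
  shows "integrable circ f"
  using finite_measure.integrable_const_bound[OF finite_measure_circ assms(2,1)] .

lemma Linf_integrable: "f \<in> Linf \<Longrightarrow> integrable circ f"
  using integrable_bounded_circ by (fastforce simp: Linf_iff)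

lemma Linf_integrable_norm_sq:
  assumes "f \<in> Linf"
  shows "integrable circ (\<lambda>t. (cmod (f t))\<^sup>2)"
proof -
  obtain B where "AE t in circ. cmod (f t) \<le> B" using assms by (auto simp: Linf_iff)
  then have "AE t in circ. norm ((cmod (f t))\<^sup>2) \<le> B\<^sup>2"
    by eventually_elim (auto intro: power_mono)
  then show ?thesis using assms by (intro integrable_bounded_circ) auto
qed

lemma Linf_const [intro]: "(\<lambda>t. c) \<in> Linf"
  by (auto simp: Linf_iff)

lemma Linf_add [intro]: "f \<in> Linf \<Longrightarrow> g \<in> Linf \<Longrightarrow> (\<lambda>t. f t + g t) \<in> Linf"
proof -
  assume f: "f \<in> Linf" and g: "g \<in> Linf"
  obtain B1 B2 where "AE t in circ. cmod (f t) \<le> B1" "AE t in circ. cmod (g t) \<le> B2"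
    using f g by (auto simp: Linf_iff)
  then have "AE t in circ. cmod (f t + g t) \<le> B1 + B2"
    by eventually_elim (rule order_trans[OF norm_triangle_ineq], simp add: add_mono)
  then show ?thesis using f g by (auto simp: Linf_iff)
qed

lemma Linf_mult [intro]: "f \<in> Linf \<Longrightarrow> g \<in> Linf \<Longrightarrow> (\<lambda>t. f t * g t) \<in> Linf"
proof -
  assume f: "f \<in> Linf" and g: "g \<in> Linf"
  obtain B1 B2 where "B1 \<ge> 0" and "AE t in circ. cmod (f t) \<le> B1" "AE t in circ. cmod (g t) \<le> B2"
    using Linf_AE_bounded[OF f] Linf_iff g by metis
  from \<open>AE t in circ. cmod (f t) \<le> B1\<close> \<open>AE t in circ. cmod (g t) \<le> B2\<close>
  have "AE t in circ. cmod (f t * g t) \<le> B1 * B2"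
    by eventually_elim (use \<open>B1 \<ge> 0\<close> in \<open>auto simp: norm_mult intro!: mult_mono\<close>)
  then show ?thesis using f g by (auto simp: Linf_iff)
qed

lemma borel_measurable_cnj [measurable]:
  "f \<in> borel_measurable M \<Longrightarrow> (\<lambda>t. cnj (f t)) \<in> borel_measurable M"
  by (rule measurable_compose[of f M borel, OF _ borel_measurable_continuous_onI])
     (auto intro: continuous_intros)

lemma Linf_cnj [intro]: "f \<in> Linf \<Longrightarrow> (\<lambda>t. cnj (f t)) \<in> Linf"
  by (auto simp: Linf_iff)

lemma Linf_uminus [intro]: "f \<in> Linf \<Longrightarrow> (\<lambda>t. - f t) \<in> Linf"
  by (auto simp: Linf_iff)

lemma Linf_diff [intro]: "f \<in> Linf \<Longrightarrow> g \<in> Linf \<Longrightarrow> (\<lambda>t. f t - g t) \<in> Linf"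
  using Linf_add[of f "\<lambda>t. - g t"] by auto

lemma continuous_on_imp_Linf:
  assumes "continuous_on {0..2*pi} h"
  shows "h \<in> Linf"
proof -
  obtain B where "\<forall>t\<in>{0..2*pi}. cmod (h t) \<le> B"
    using compact_imp_bounded[OF compact_continuous_image[OF assms compact_Icc]]
    by (auto simp: bounded_iff)
  then have "AE t in circ. cmod (h t) \<le> B" by (auto intro: AE_I2)
  then show ?thesis using continuous_on_imp_borel_measurable_circ[OF assms] by (auto simp: Linf_iff)
qed

lemma Linf_cis [intro]: "(\<lambda>t. cis (c * t)) \<in> Linf" "(\<lambda>t. cis (- (c * t))) \<in> Linf"
  by (auto intro!: continuous_on_imp_Linf continuous_intros)

lemma continuous_on_trig_poly: "continuous_on A (trig_poly L)"
  by (induction L) (auto intro!: continuous_intros)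

lemma Linf_trig_poly [intro]: "trig_poly L \<in> Linf"
  by (rule continuous_on_imp_Linf[OF continuous_on_trig_poly])

section \<open>Fourier coefficients and best \<open>L\<^sup>2\<close> approximation\<close>

lemma integral_circ_cis: "(LINT t|circ. cis (of_int k * t)) = (if k = 0 then 2*pi else 0)"
proof -
  have int: "integrable circ (\<lambda>t. cis (of_int k * t))"
    using Linf_integrable[OF Linf_cis(1)] .
  show ?thesis
  proof (cases "k = 0")
    case True
    have "((\<lambda>t. cis (of_int k * t)) has_integral complex_of_real (2*pi)) {0..2*pi}"
      using True has_integral_const[of "1::complex" 0 "2*pi"] by (simp add: scaleR_conv_of_real)
    then show ?thesis using True integral_circ_eq_has_integral[OF int] by simp
  next
    case False
    define F where "F = (\<lambda>t::real. cis (of_int k * t) / (\<i> * of_int k))"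
    have "((\<lambda>t. cis (of_int k * t)) has_integral (F (2*pi) - F 0)) {0..2*pi}"
    proof (rule fundamental_theorem_of_calculus)
      fix x assume "x \<in> {0..2*pi}"
      show "(F has_vector_derivative cis (of_int k * x)) (at x within {0..2*pi})"
        unfolding F_def has_vector_derivative_def
        by (rule derivative_eq_intros refl | simp add: False)+
           (auto simp: fun_eq_iff scaleR_conv_of_real False algebra_simps)
    qed simp
    moreover have "cis (of_int k * (2*pi)) = 1"
      by (metis cis_multiple_2pi Ints_of_int mult.commute)
    ultimately show ?thesis using False integral_circ_eq_has_integral[OF int] by (simp add: F_def)
  qed
qed

lemma fourier_coeff_cis: "fourier_coeff (\<lambda>t. cis (of_int m * t)) k = (if k = m then 1 else 0)"
proof -
  have "cis (of_int m * t) * cis (- (of_int k * t)) = cis (of_int (m - k) * t)" for t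
    by (simp add: cis_mult algebra_simps)
  then show ?thesis
    using integral_circ_cis[of "m - k"] by (simp add: fourier_coeff_def del: of_int_diff)
qed

lemma integral_mult_trig_poly:
  assumes a: "a \<in> Linf"
  shows "(LINT t|circ. a t * trig_poly L t) = 2*pi * (\<Sum>(c, k)\<leftarrow>L. c * fourier_coeff a (- k))"
proof (induction L)
  case (Cons p L)
  obtain c k where p: "p = (c, k)" by force
  have "a t * trig_poly (p # L) t = c * (a t * cis (- (of_int (- k) * t))) + a t * trig_poly L t" for t
    by (simp add: p algebra_simps)
  moreover have "integrable circ (\<lambda>t. c * (a t * cis (- (of_int (- k) * t))))"
    using a by (intro Linf_integrable Linf_mult Linf_const) auto
  moreover have "integrable circ (\<lambda>t. a t * trig_poly L t)"
    using a by (intro Linf_integrable Linf_mult Linf_trig_poly)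
  ultimately show ?case
    using Cons by (simp add: p fourier_coeff_def algebra_simps)
qed simp

lemma fourier_coeff_trig_poly: "fourier_coeff (trig_poly L) m = (\<Sum>(c, k)\<leftarrow>L. if k = m then c else 0)"
proof -
  have "fourier_coeff (trig_poly L) m
      = complex_of_real (1 / (2*pi)) * (LINT t|circ. cis (of_int (- m) * t) * trig_poly L t)"
    by (simp add: fourier_coeff_def mult.commute)
  also have "\<dots> = (\<Sum>(c, k)\<leftarrow>L. c * fourier_coeff (\<lambda>t. cis (of_int (- m) * t)) (- k))"
    by (subst integral_mult_trig_poly) auto
  also have "\<dots> = (\<Sum>(c, k)\<leftarrow>L. if k = m then c else 0)"
    by (induction L) (auto simp: fourier_coeff_cis simp del: of_int_minus)
  finally show ?thesis .
qed

lemma cnj_trig_poly: "cnj (trig_poly L t) = trig_poly (map (\<lambda>(c, k). (cnj c, - k)) L) t"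
  by (induction L) (auto simp: cis_cnj)

lemma fourier_coeff_diff:
  assumes "f \<in> Linf" and "g \<in> Linf"
  shows "fourier_coeff (\<lambda>t. f t - g t) m = fourier_coeff f m - fourier_coeff g m"
proof -
  have "integrable circ (\<lambda>t. h t * cis (- (of_int m * t)))" if "h \<in> Linf" for h
    using that by (intro Linf_integrable Linf_mult) auto
  then show ?thesis
    using assms by (simp add: fourier_coeff_def left_diff_distrib algebra_simps)
qed

definition fourier_partial_sum :: "int \<Rightarrow> (real \<Rightarrow> complex) \<Rightarrow> (complex \<times> int) list" where
  "fourier_partial_sum N f = map (\<lambda>k. (fourier_coeff f k, k)) [-N..N]"

lemma fourier_coeff_fourier_partial_sum:
  assumes "\<bar>m\<bar> \<le> N"
  shows "fourier_coeff (trig_poly (fourier_partial_sum N f)) m = fourier_coeff f m"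
proof -
  have "fourier_coeff (trig_poly (fourier_partial_sum N f)) m
      = (\<Sum>k\<in>{-N..N}. if k = m then fourier_coeff f k else 0)"
    by (simp add: fourier_coeff_trig_poly fourier_partial_sum_def o_def sum_list_distinct_conv_sum_set)
  also have "\<dots> = fourier_coeff f m" using assms by (simp add: abs_le_iff)
  finally show ?thesis .
qed

lemma integral_norm_sq_add_orthogonal:
  assumes a: "a \<in> Linf" and b: "b \<in> Linf" and orth: "(LINT t|circ. a t * cnj (b t)) = 0"
  shows "(LINT t|circ. (cmod (a t + b t))\<^sup>2) = (LINT t|circ. (cmod (a t))\<^sup>2) + (LINT t|circ. (cmod (b t))\<^sup>2)"
proof -
  have expand: "(cmod (a t + b t))\<^sup>2 = (cmod (a t))\<^sup>2 + (cmod (b t))\<^sup>2 + 2 * Re (a t * cnj (b t))" for t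
    unfolding cmod_power2 by (simp add: algebra_simps power2_eq_square)
  have int: "integrable circ (\<lambda>t. a t * cnj (b t))"
    using a b by (intro Linf_integrable Linf_mult Linf_cnj)
  have "(LINT t|circ. 2 * Re (a t * cnj (b t))) = 2 * Re (LINT t|circ. a t * cnj (b t))"
    unfolding integral_mult_right_zero integral_Re[OF int] ..
  then have "(LINT t|circ. 2 * Re (a t * cnj (b t))) = 0" using orth by simp
  moreover have "integrable circ (\<lambda>t. 2 * Re (a t * cnj (b t)))"
    using int by (intro integrable_mult_right integrable_Re)
  ultimately show ?thesis
    unfolding expand using Linf_integrable_norm_sq[OF a] Linf_integrable_norm_sq[OF b] by simp
qed

lemma fourier_partial_sum_best_L2_approx:
  assumes f: "f \<in> Linf" and L: "\<forall>k\<in>snd ` set L. \<bar>k\<bar> \<le> N"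
  shows "(LINT t|circ. (cmod (f t - trig_poly (fourier_partial_sum N f) t))\<^sup>2)
    \<le> (LINT t|circ. (cmod (f t - trig_poly L t))\<^sup>2)"
proof -
  define S where "S = fourier_partial_sum N f"
  define a where "a = (\<lambda>t. f t - trig_poly S t)"
  define M where "M = S @ trig_poly_mult [(-1, 0)] L"
  have a: "a \<in> Linf" using f by (auto simp: a_def)
  have a_coeff: "fourier_coeff a k = 0" if "\<bar>k\<bar> \<le> N" for k
    using f that by (simp add: a_def S_def fourier_coeff_diff Linf_trig_poly fourier_coeff_fourier_partial_sum)
  have "\<forall>k\<in>snd ` set M. \<bar>k\<bar> \<le> N"
    using L by (auto simp: M_def S_def fourier_partial_sum_def trig_poly_mult_def)
  then have "(LINT t|circ. a t * cnj (trig_poly M t)) = 0"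
    unfolding cnj_trig_poly integral_mult_trig_poly[OF a]
    by (induction M) (auto simp: a_coeff)
  \<comment> \<open>\<open>f - L = a + trig_poly M\<close>, where \<open>M\<close> has degree \<open>N\<close> and \<open>a\<close> has no frequencies in \<open>[-N, N]\<close>\<close>
  from integral_norm_sq_add_orthogonal[OF a Linf_trig_poly this]
  have "(LINT t|circ. (cmod (f t - trig_poly L t))\<^sup>2)
      = (LINT t|circ. (cmod (a t))\<^sup>2) + (LINT t|circ. (cmod (trig_poly M t))\<^sup>2)"
    by (simp add: a_def M_def)
  moreover have "(LINT t|circ. (cmod (trig_poly M t))\<^sup>2) \<ge> 0"
    by (rule integral_nonneg_AE) auto
  ultimately show ?thesis by (simp add: a_def S_def)
qed

section \<open>Density of trigonometric polynomials in \<open>L\<^sup>2\<close>\<close>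

lemma cutoff_tendsto_1:
  assumes "t \<in> {0<..<2*pi}"
  shows "(\<lambda>n. min 1 (real n * t * (2*pi - t))) \<longlonglongrightarrow> 1"
proof -
  have "t * (2*pi - t) > 0" using assms by simp
  then have "LIM n sequentially. t * (2*pi - t) * real n :> at_top"
    by (rule filterlim_tendsto_pos_mult_at_top[OF tendsto_const _ filterlim_real_sequentially])
  then have "eventually (\<lambda>n. 1 \<le> t * (2*pi - t) * real n) sequentially"
    by (simp add: filterlim_at_top)
  then have "eventually (\<lambda>n. min 1 (real n * t * (2*pi - t)) = 1) sequentially"
    by eventually_elim (simp add: algebra_simps)
  then show ?thesis by (rule tendsto_eventually)
qed

(* Continuous approximants exist by measurability; they are clamped to the ball of radius B
   by the nearest-point map and damped by a cutoff vanishing at 0 and 2 pi. *)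
lemma Linf_AE_limit_of_continuous:
  assumes f: "f \<in> Linf" and "B \<ge> 0" and f_le: "AE t in circ. cmod (f t) \<le> B"
  obtains h where "\<And>n. continuous_on {0..2*pi} (h n)" and "\<And>n. h n 0 = h n (2*pi)"
    and "\<And>n t. t \<in> {0..2*pi} \<Longrightarrow> cmod (h n t) \<le> B"
    and "AE t in circ. (\<lambda>n. h n t) \<longlonglongrightarrow> f t"
proof -
  have "f \<in> borel_measurable (lebesgue_on {0..2*pi})"
    using Linf_imp_borel_measurable[OF f] by (simp add: circ_def)
  then have "f measurable_on {0..2*pi}"
    by (simp add: measurable_on_iff_borel_measurable)
  then obtain N g where N: "negligible N" and g: "\<And>n. continuous_on UNIV (g n)"
    and g_lim: "\<And>t. t \<notin> N \<Longrightarrow> (\<lambda>n. g n t) \<longlonglongrightarrow> (if t \<in> {0..2*pi} then f t else 0)"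
    unfolding measurable_on_def by blast
  define T where "T = closest_point (cball (0::complex) B)"
  have T: "continuous_on UNIV T" "\<And>z. cmod (T z) \<le> B" "\<And>z. cmod z \<le> B \<Longrightarrow> T z = z"
    using \<open>B \<ge> 0\<close> closest_point_in_set[of "cball (0::complex) B"]
    by (auto simp: T_def intro: continuous_on_closest_point closest_point_self)
  define h where "h n t = complex_of_real (min 1 (real n * t * (2*pi - t))) * T (g n t)" for n t
  show ?thesis
  proof
    show "continuous_on {0..2*pi} (h n)" for n
    proof -
      have "continuous_on {0..2*pi} (\<lambda>t. T (g n t))"
        by (rule continuous_on_compose2[OF T(1) continuous_on_subset[OF g]]) auto
      then show ?thesis unfolding h_def by (intro continuous_intros)
    qed
    show "h n 0 = h n (2*pi)" for n by (simp add: h_def)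
    show "cmod (h n t) \<le> B" if "t \<in> {0..2*pi}" for n t
    proof -
      have "cmod (h n t) = \<bar>min 1 (real n * t * (2*pi - t))\<bar> * cmod (T (g n t))"
        by (simp add: h_def norm_mult)
      also have "\<dots> \<le> 1 * B" using that T(2) by (intro mult_mono) auto
      finally show ?thesis by simp
    qed
    have "negligible {0, 2*pi::real}" by simp
    show "AE t in circ. (\<lambda>n. h n t) \<longlonglongrightarrow> f t"
      using AE_circ_not_in_negligible[OF N] AE_circ_not_in_negligible[OF \<open>negligible {0, 2*pi}\<close>]
        AE_space[of circ] f_le
    proof eventually_elim
      case (elim t)
      then have "t \<in> {0<..<2*pi}" by auto
      have "(\<lambda>n. T (g n t)) \<longlonglongrightarrow> T (f t)"
        using g_lim[OF elim(1)] elim(3) continuous_on_tendsto_compose[OF T(1)] by auto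
      then have "(\<lambda>n. h n t) \<longlonglongrightarrow> complex_of_real 1 * f t"
        unfolding h_def T(3)[OF elim(4)]
        by (intro tendsto_mult tendsto_of_real cutoff_tendsto_1 \<open>t \<in> {0<..<2*pi}\<close>)
      then show ?case by simp
    qed
  qed
qed

lemma Linf_L2_approx_by_continuous:
  assumes f: "f \<in> Linf" and e: "e > 0"
  obtains h where "continuous_on {0..2*pi} h" and "h 0 = h (2*pi)"
    and "(LINT t|circ. (cmod (f t - h t))\<^sup>2) < e"
proof -
  obtain B where "B \<ge> 0" and f_le: "AE t in circ. cmod (f t) \<le> B"
    using Linf_AE_bounded[OF f] .
  obtain h where h: "\<And>n. continuous_on {0..2*pi} (h n)" "\<And>n. h n 0 = h n (2*pi)"
    and h_le: "\<And>n t. t \<in> {0..2*pi} \<Longrightarrow> cmod (h n t) \<le> B"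
    and h_lim: "AE t in circ. (\<lambda>n. h n t) \<longlonglongrightarrow> f t"
    using Linf_AE_limit_of_continuous[OF f \<open>B \<ge> 0\<close> f_le] by blast
  have [measurable]: "h n \<in> borel_measurable circ" for n
    by (rule continuous_on_imp_borel_measurable_circ[OF h(1)])
  have "(\<lambda>n. LINT t|circ. (cmod (f t - h n t))\<^sup>2) \<longlonglongrightarrow> (LINT t|circ. 0)"
  proof (rule integral_dominated_convergence[where w="\<lambda>t. (2*B)\<^sup>2"])
    show "AE t in circ. (\<lambda>n. (cmod (f t - h n t))\<^sup>2) \<longlonglongrightarrow> 0"
      using h_lim by eventually_elim (auto intro!: tendsto_eq_intros)
    show "AE t in circ. norm ((cmod (f t - h n t))\<^sup>2) \<le> (2*B)\<^sup>2" for n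
      using f_le AE_space[of circ]
    proof eventually_elim
      case (elim t)
      have "cmod (f t - h n t) \<le> 2*B"
        using norm_triangle_ineq4[of "f t" "h n t"] elim h_le[of t n] by simp
      then show ?case using power_mono[OF _ norm_ge_zero, of _ "2*B" 2] by simp
    qed
  qed (use f in auto)
  then have "eventually (\<lambda>n. (LINT t|circ. (cmod (f t - h n t))\<^sup>2) < e) sequentially"
    using e by (simp add: order_tendstoD(2))
  then obtain n where "(LINT t|circ. (cmod (f t - h n t))\<^sup>2) < e"
    by (meson eventually_sequentially order_refl)
  then show ?thesis using that h by blast
qed

lemma norm_add_squared_le: "(cmod (a + b))\<^sup>2 \<le> 2 * (cmod a)\<^sup>2 + 2 * (cmod b)\<^sup>2"
proof -
  have "(cmod (a + b))\<^sup>2 \<le> (cmod a + cmod b)\<^sup>2"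
    by (intro power_mono norm_triangle_ineq) auto
  also have "\<dots> \<le> 2 * (cmod a)\<^sup>2 + 2 * (cmod b)\<^sup>2"
    using zero_le_square[of "cmod a - cmod b"] by (simp add: power2_eq_square algebra_simps)
  finally show ?thesis .
qed

lemma trig_poly_dense_L2:
  assumes f: "f \<in> Linf" and e: "e > 0"
  obtains L where "(LINT t|circ. (cmod (f t - trig_poly L t))\<^sup>2) < e"
proof -
  obtain h where h: "continuous_on {0..2*pi} h" "h 0 = h (2*pi)"
    and f_h: "(LINT t|circ. (cmod (f t - h t))\<^sup>2) < e/4"
    using Linf_L2_approx_by_continuous[OF f, of "e/4"] e by auto
  define \<epsilon> where "\<epsilon> = sqrt (e / (8*pi))"
  have "\<epsilon> > 0" using e by (simp add: \<epsilon>_def)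
  then obtain L where L: "\<forall>t\<in>{0..2*pi}. cmod (h t - trig_poly L t) < \<epsilon>"
    using uniform_approx_by_trig_poly[OF h] by blast
  have hL: "h \<in> Linf" by (rule continuous_on_imp_Linf[OF h(1)])
  have "(LINT t|circ. (cmod (h t - trig_poly L t))\<^sup>2) \<le> (LINT t|circ. \<epsilon>\<^sup>2)"
  proof (intro integral_mono Linf_integrable_norm_sq)
    show "(cmod (h t - trig_poly L t))\<^sup>2 \<le> \<epsilon>\<^sup>2" if "t \<in> space circ" for t
      using L that by (intro power_mono) (auto simp: less_imp_le)
  qed (use hL in auto)
  also have "\<dots> = e/4"
    using e by (simp add: \<epsilon>_def)
  finally have h_L: "(LINT t|circ. (cmod (h t - trig_poly L t))\<^sup>2) \<le> e/4" .
  have "(LINT t|circ. (cmod (f t - trig_poly L t))\<^sup>2)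
      \<le> (LINT t|circ. 2 * (cmod (f t - h t))\<^sup>2 + 2 * (cmod (h t - trig_poly L t))\<^sup>2)"
    using norm_add_squared_le[of "f t - h t" "h t - trig_poly L t" for t] f hL
    by (intro integral_mono Linf_integrable_norm_sq Bochner_Integration.integrable_add
        integrable_mult_right) auto
  also have "\<dots> = 2 * (LINT t|circ. (cmod (f t - h t))\<^sup>2) + 2 * (LINT t|circ. (cmod (h t - trig_poly L t))\<^sup>2)"
    using f hL by (simp add: Linf_integrable_norm_sq Linf_diff Linf_trig_poly)
  finally show ?thesis using f_h h_L by (intro that[of L]) linarith
qed

lemma fourier_partial_sum_L2_approx:
  assumes f: "f \<in> Linf" and e: "e > 0"
  obtains N where "(LINT t|circ. (cmod (f t - trig_poly (fourier_partial_sum N f) t))\<^sup>2) < e"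
proof -
  obtain L where L: "(LINT t|circ. (cmod (f t - trig_poly L t))\<^sup>2) < e"
    using trig_poly_dense_L2[OF f e] .
  define N where "N = Max (insert 0 ((\<lambda>p. \<bar>snd p\<bar>) ` set L))"
  have "\<forall>k\<in>snd ` set L. \<bar>k\<bar> \<le> N" unfolding N_def by (auto intro: Max_ge)
  from fourier_partial_sum_best_L2_approx[OF f this] L show ?thesis
    by (intro that[of N]) linarith
qed

lemma integral_norm_le_L2:
  assumes a: "a \<in> Linf" and e: "e > 0"
  shows "(LINT t|circ. cmod (a t)) \<le> 2*pi*e + (LINT t|circ. (cmod (a t))\<^sup>2) / e"
proof -
  have am_gm: "x \<le> e + x\<^sup>2 / e" if "x \<ge> 0" for x :: real
  proof -
    have "2 * (e * x) \<le> e\<^sup>2 + x\<^sup>2"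
      using zero_le_square[of "x - e"] by (simp add: power2_eq_square algebra_simps)
    moreover have "0 \<le> e * x" using that e by simp
    ultimately have "e * x \<le> e\<^sup>2 + x\<^sup>2" by linarith
    then show ?thesis using e by (simp add: field_simps power2_eq_square)
  qed
  have "(LINT t|circ. cmod (a t)) \<le> (LINT t|circ. e + (cmod (a t))\<^sup>2 / e)"
    using a by (intro integral_mono am_gm integrable_norm Linf_integrable
        Bochner_Integration.integrable_add integrable_divide_zero Linf_integrable_norm_sq) auto
  also have "\<dots> = 2*pi*e + (LINT t|circ. (cmod (a t))\<^sup>2) / e"
    using a by (simp add: Linf_integrable_norm_sq)
  finally show ?thesis .
qed

section \<open>Products of \<open>H\<^sup>\<infinity>\<close> and \<open>H\<^sup>\<infinity>\<^sub>0\<close> functions\<close>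

lemma integral_mult_fourier_partial_sum_eq_0:
  assumes f_coeff: "\<And>k. k < 0 \<Longrightarrow> fourier_coeff f k = 0"
    and h: "h \<in> Linf" and h_coeff: "\<And>k. k \<le> 0 \<Longrightarrow> fourier_coeff h k = 0"
  shows "(LINT t|circ. trig_poly (fourier_partial_sum N f) t * h t) = 0"
proof -
  have "(\<lambda>k. fourier_coeff f k * fourier_coeff h (- k)) = (\<lambda>k. 0)"
  proof
    show "fourier_coeff f k * fourier_coeff h (- k) = 0" for k
      by (cases "k < 0") (auto simp: f_coeff h_coeff)
  qed
  then have "(LINT t|circ. h t * trig_poly (fourier_partial_sum N f) t) = 0"
    by (simp add: integral_mult_trig_poly[OF h] fourier_partial_sum_def o_def)
  then show ?thesis by (simp add: mult.commute)
qed

lemma norm_integral_mult_le: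
  assumes a: "a \<in> Linf" and h: "h \<in> Linf" and h_le: "AE t in circ. cmod (h t) \<le> B"
  shows "cmod (LINT t|circ. a t * h t) \<le> B * (LINT t|circ. cmod (a t))"
proof -
  have "cmod (LINT t|circ. a t * h t) \<le> (LINT t|circ. cmod (a t * h t))"
    by (rule integral_norm_bound)
  also have "\<dots> \<le> (LINT t|circ. B * cmod (a t))"
  proof (rule integral_mono_AE)
    show "AE t in circ. cmod (a t * h t) \<le> B * cmod (a t)"
      using h_le by eventually_elim (metis mult.commute mult_right_mono norm_ge_zero norm_mult)
  qed (use a h in \<open>auto intro!: integrable_norm Linf_integrable Linf_mult\<close>)
  finally show ?thesis by simp
qed

lemma norm_le_mult_epsilon_imp_zero:
  fixes x :: "'a::real_normed_vector"
  assumes "\<And>e. e > 0 \<Longrightarrow> norm x \<le> C * e"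
  shows "x = 0"
proof (rule ccontr)
  assume "x \<noteq> 0"
  then have "norm x > 0" by simp
  define e where "e = norm x / (\<bar>C\<bar> + 1)"
  have "e > 0" using \<open>norm x > 0\<close> by (simp add: e_def add_pos_nonneg)
  have "norm x \<le> \<bar>C\<bar> * e" using assms[OF \<open>e > 0\<close>] \<open>e > 0\<close> by (smt (verit) mult_right_mono)
  also have "\<dots> < norm x" using \<open>norm x > 0\<close> by (simp add: e_def field_simps)
  finally show False by simp
qed

lemma integral_mult_eq_0_of_fourier_supports:
  assumes f: "f \<in> Linf" and f_coeff: "\<And>k. k < 0 \<Longrightarrow> fourier_coeff f k = 0"
    and h: "h \<in> Linf" and h_coeff: "\<And>k. k \<le> 0 \<Longrightarrow> fourier_coeff h k = 0"
  shows "(LINT t|circ. f t * h t) = 0"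
proof -
  obtain B where "B \<ge> 0" and h_le: "AE t in circ. cmod (h t) \<le> B"
    using Linf_AE_bounded[OF h] .
  show ?thesis
  proof (rule norm_le_mult_epsilon_imp_zero)
    fix e :: real assume e: "e > 0"
    obtain N where N: "(LINT t|circ. (cmod (f t - trig_poly (fourier_partial_sum N f) t))\<^sup>2) < e\<^sup>2"
      using fourier_partial_sum_L2_approx[OF f] e by (metis zero_less_power)
    define a where "a = (\<lambda>t. f t - trig_poly (fourier_partial_sum N f) t)"
    have a: "a \<in> Linf" using f by (auto simp: a_def)
    have "(LINT t|circ. f t * h t) = (LINT t|circ. a t * h t)"
      using integral_mult_fourier_partial_sum_eq_0[OF f_coeff h h_coeff, of N] f h
      by (simp add: a_def left_diff_distrib Linf_integrable Linf_mult Linf_trig_poly)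
    then have "cmod (LINT t|circ. f t * h t) \<le> B * (LINT t|circ. cmod (a t))"
      using norm_integral_mult_le[OF a h h_le] by simp
    also have "\<dots> \<le> B * (2*pi*e + (LINT t|circ. (cmod (a t))\<^sup>2) / e)"
      using integral_norm_le_L2[OF a e] \<open>B \<ge> 0\<close> by (rule mult_left_mono)
    also have "\<dots> \<le> B * (2*pi*e + e)"
      using N e \<open>B \<ge> 0\<close>
      by (intro mult_left_mono add_left_mono) (auto simp: a_def power2_eq_square field_simps)
    finally show "cmod (LINT t|circ. f t * h t) \<le> B * (2*pi + 1) * e"
      by (simp add: algebra_simps)
  qed
qed

lemma fourier_coeff_mult_cis:
  "fourier_coeff (\<lambda>t. g t * cis (- (of_int n * t))) m = fourier_coeff g (m + n)"
proof -
  have "(\<lambda>t. g t * cis (- (of_int n * t)) * cis (- (of_int m * t)))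
      = (\<lambda>t. g t * cis (- (of_int (m + n) * t)))"
    by (simp add: cis_mult algebra_simps)
  then show ?thesis by (simp only: fourier_coeff_def)
qed

lemma Hinf_mult_Hinf0:
  assumes f: "f \<in> Hinf" and g: "g \<in> Hinf0"
  shows "(\<lambda>t. f t * g t) \<in> Hinf0"
proof -
  have fL: "f \<in> Linf" and gL: "g \<in> Linf" using f g by (auto simp: Hinf0_def Hinf_def)
  have g_coeff: "fourier_coeff g k = 0" if "k \<le> 0" for k
    using g that by (cases "k = 0") (auto simp: Hinf0_def Hinf_def)
  have "fourier_coeff (\<lambda>t. f t * g t) n = 0" if "n \<le> 0" for n
  proof -
    have "(LINT t|circ. f t * (g t * cis (- (of_int n * t)))) = 0"
      using f g_coeff \<open>n \<le> 0\<close> gL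
      by (intro integral_mult_eq_0_of_fourier_supports fL Linf_mult)
        (auto simp: Hinf_def fourier_coeff_mult_cis)
    then show ?thesis by (simp add: fourier_coeff_def mult.assoc)
  qed
  moreover have "(\<lambda>t. f t * g t) \<in> Linf" using fL gL by (rule Linf_mult)
  ultimately show ?thesis by (auto simp: Hinf0_def Hinf_def)
qed

section \<open>Saturated functions\<close>

lemma zero_in_Hinf0: "(\<lambda>t. 0) \<in> Hinf0"
  using Linf_const[of 0] by (simp add: Hinf0_def Hinf_def fourier_coeff_def)

lemma saturated_iff:
  "saturated \<phi> \<longleftrightarrow> (\<forall>f\<in>Hinf0. sup_norm \<phi> \<le> sup_norm (\<lambda>t. \<phi> t - cnj (f t)))"
proof -
  have "(INF f\<in>Hinf0. sup_norm (\<lambda>t. \<phi> t - cnj (f t))) \<le> sup_norm \<phi>"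
    using INF_lower[OF zero_in_Hinf0, of "\<lambda>f. sup_norm (\<lambda>t. \<phi> t - cnj (f t))"] by simp
  then show ?thesis unfolding saturated_def
    by (metis (no_types, lifting) INF_greatest le_INF_iff order_antisym)
qed

lemma norm_unimodular_mult_diff_cnj:
  assumes "cmod u = 1"
  shows "cmod (u * z - cnj w) = cmod (z - cnj (u * w))"
proof -
  have "u * cnj u = 1"
    using assms by (metis complex_norm_square mult.commute of_real_1 power_one)
  then have "u * z - cnj w = u * (z - cnj (u * w))" by (simp add: algebra_simps)
  then show ?thesis using assms by (simp add: norm_mult)
qed

lemma sup_norm_AE_cong:
  assumes "f \<in> borel_measurable circ" and "g \<in> borel_measurable circ"
    and "AE t in circ. cmod (f t) = cmod (g t)"
  shows "sup_norm f = sup_norm g"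
  unfolding sup_norm_def by (rule esssup_AE_cong) (use assms in auto)

theorem lemma2:
  fixes \<phi> I :: "real \<Rightarrow> complex"
  assumes "\<phi> \<in> Hinf" and "saturated \<phi>" and "inner_fun I"
  shows "saturated (\<lambda>t. I t * \<phi> t)"
proof -
  have I: "I \<in> Hinf" and I_1: "AE t in circ. cmod (I t) = 1"
    using assms(3) by (auto simp: inner_fun_def)
  have [measurable]: "I \<in> borel_measurable circ" "\<phi> \<in> borel_measurable circ"
    using I assms(1) by (auto simp: Hinf_def Linf_def)
  have norm_I\<phi>: "sup_norm (\<lambda>t. I t * \<phi> t) = sup_norm \<phi>"
    using I_1 by (intro sup_norm_AE_cong) (auto simp: norm_mult elim: eventually_mono)
  have shift: "sup_norm (\<lambda>t. I t * \<phi> t - cnj (f t)) = sup_norm (\<lambda>t. \<phi> t - cnj (I t * f t))"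
    if "f \<in> Hinf0" for f
  proof (rule sup_norm_AE_cong)
    show "AE t in circ. cmod (I t * \<phi> t - cnj (f t)) = cmod (\<phi> t - cnj (I t * f t))"
      using I_1 by eventually_elim (simp add: norm_unimodular_mult_diff_cnj)
  qed (use that in \<open>auto simp: Hinf0_def Hinf_def Linf_def\<close>)
  show ?thesis
    unfolding saturated_iff
  proof
    fix f assume f: "f \<in> Hinf0"
    have "sup_norm \<phi> \<le> sup_norm (\<lambda>t. \<phi> t - cnj (I t * f t))"
      using bspec[OF assms(2)[unfolded saturated_iff] Hinf_mult_Hinf0[OF I f]] .
    then show "sup_norm (\<lambda>t. I t * \<phi> t) \<le> sup_norm (\<lambda>t. I t * \<phi> t - cnj (f t))"
      by (simp only: norm_I\<phi> shift[OF f])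
  qed
qed

end
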